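(* Let $R$ be a regular run and $t>0$. The guard of SignalOpen [Dir = close and SafeToOpen] holds at $t$ (equivalently, SignalOpen fires at $t$) if and only if SafeToOpen becomes true at $t$. Consequently, SignalOpen fires at a moment $t>0$ only if TrackStatus$(x)$ becomes empty at $t$ for some track $x$.
   Context: Setting (evolving algebra for the railroad crossing). States are structures over a vocabulary containing: a finite universe Tracks; the reals and ExtendedReals $=\mathbb{R}\cup\{\infty\}$ with standard $<$ and $+$ ($\infty$ largest); a nullary real-valued symbol $\mathrm{CT}$ (current time); positive real constants $d_{close},d_{open},d_{min},d_{max}$ with $d_{close}<d_{min}\le d_{max}$; a unary function TrackStatus from Tracks to $\{\text{empty},\text{coming},\text{incrossing}\}$; a unary function Deadline from Tracks to ExtendedReals; a nullary Dir with values in $\{\text{open},\text{close}\}$; a nullary GateStatus with values in $\{\text{opened},\text{closed}\}$. Put $W=d_{min}-d_{close}$ and $\Delta_{close}=d_{close}+(d_{max}-d_{min})=d_{max}-W$. For a track $x$, $s(x)$ is the condition [$\mathrm{TrackStatus}(x)=\text{empty}$ or $\mathrm{CT}+d_{open}<\mathrm{Deadline}(x)$], and SafeToOpen is $\forall x\in\mathrm{Tracks}\ s(x)$. The program has two modules (agents). Gate: simultaneously OpenGate "if Dir=open then GateStatus:=opened" and CloseGate "if Dir=close then GateStatus:=closed". Controller: simultaneously, for every track $x$, SetDeadline$(x)$ "if TrackStatus$(x)$=coming and Deadline$(x)=\infty$ then Deadline$(x):=\mathrm{CT}+W$", SignalClose$(x)$ "if $\mathrm{CT}=$Deadline$(x)$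 then Dir:=close", ClearDeadline$(x)$ "if TrackStatus$(x)$=empty and Deadline$(x)<\infty$ then Deadline$(x):=\infty$", together with SignalOpen "if Dir=close and SafeToOpen then Dir:=open". Executing a module means computing all updates it generates in the current state and performing them simultaneously (nothing happens if the update set is inconsistent). A module is enabled at a state if its update set is consistent and contains an update that changes the state. TrackStatus is external (changed only by the environment); Deadline, Dir, GateStatus are internal (changed only by the modules); other symbols are static. Runs: for $t\mapsto R(t)$, $t\in[0,\infty)$, let $\rho(t)$ be the reduct of $R(t)$ without CT. $R$ is a pre-run if all $R(t)$ share a superuniverse, $\mathrm{CT}=t$ in $R(t)$, and for every $\tau>0$ there are $0=t_0<\dots<t_n=\tau$ with $\rho$ constant on each $(t_i,t_{i+1})$. For a term $e$ (free variables fixed), $e_t$ is its value in $R(t)$, $e_{t+}$ (resp. $e_{t-}$, $t>0$) its constant value on some $(t,t+\epsilon)$ (resp. $(t-\epsilon,t)$); likewise $\rho(t\pm)$. $e$ holds over an interval if it holds at each point; $e$ becomes (is set to) $a$ at $t$ if $e_{t-}\ne a=e_t$ or $e_t\neq a=e_{t+}$. A pre-run is a run if (i) whenever $\rho(t+)\neq\rho(t)$, $\rho(t+)$ is the CT-free reduct of the result of executing some modules at $R(t)$ (these agents fire at $t$), with external functions equal in $\rho(t)$ and $\rho(t+)$; (ii) whenever $t>0$ and $\rho(t)\ne\rho(t-)$, they differ only in external functions. An agent is immediate if it fires at every moment it is enabled; bounded if immediate or there is $b>0$ with no interval $(t,t+b)$ over which it is enabled but never fires. Initial states: TrackStatus$(x)$=empty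 and Deadline$(x)=\infty$ for every track $x$. A regular run is a run $R$ with $R(0)$ initial such that: (Train Motion) for each track $x$ there is a finite or infinite sequence $0=t_0<t_1<t_2<\cdots$ (the significant moments of $x$) with TrackStatus$(x)$=empty over each $[t_{3i},t_{3i+1})$, =coming over each $[t_{3i+1},t_{3i+2})$ where $d_{min}\le t_{3i+2}-t_{3i+1}\le d_{max}$, =incrossing over each $[t_{3i+2},t_{3i+3})$, and, if the sequence is finite with last element $t_k$, then $3\mid k$ and TrackStatus$(x)$=empty over $[t_k,\infty)$; (Controller Timing) Controller is immediate; (Gate Timing) Gate is bounded, there is no interval $(t,t+d_{close})$ over which Dir=close and GateStatus=opened both hold, and no interval $(t,t+d_{open})$ over which Dir=open and GateStatus=closed both hold. *)

theory Defs
  imports Complex_Main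
begin

datatype tstat = Empty | Coming | InCrossing
datatype dirv = Open | Close
datatype gstat = Opened | Closed

datatype ext = Fin real | Infty

fun ext_less :: "ext \<Rightarrow> ext \<Rightarrow> bool" where
  "ext_less (Fin a) (Fin b) = (a < b)"
| "ext_less (Fin a) Infty = True"
| "ext_less Infty _ = False"

text \<open>CT-free part of a state (the dynamic functions; the static part is given
  by parameters).  Only the values at tracks (elements of the track set) matter.\<close>
record 'tr st =
  TrackStatus :: "'tr \<Rightarrow> tstat"
  Deadline :: "'tr \<Rightarrow> ext"
  Dir :: dirv
  GateStatus :: gstat

definition rst :: "'tr set \<Rightarrow> 'tr st \<Rightarrow> 'tr st" where
  "rst T s = s\<lparr>TrackStatus := (\<lambda>x. if x \<in> T then TrackStatus s x else Empty),
               Deadline := (\<lambda>x. if x \<in> T then Deadline s x else Infty)\<rparr>"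

datatype 'tr upd = UDL 'tr ext | UDir dirv | UGS gstat

definition consistent :: "'tr upd set \<Rightarrow> bool" where
  "consistent U \<longleftrightarrow>
     (\<forall>x a b. UDL x a \<in> U \<longrightarrow> UDL x b \<in> U \<longrightarrow> a = b) \<and>
     (\<forall>a b. UDir a \<in> U \<longrightarrow> UDir b \<in> U \<longrightarrow> a = b) \<and>
     (\<forall>a b. UGS a \<in> U \<longrightarrow> UGS b \<in> U \<longrightarrow> a = b)"

definition apply_upd :: "'tr upd set \<Rightarrow> 'tr st \<Rightarrow> 'tr st" where
  "apply_upd U s = s\<lparr>
     Deadline := (\<lambda>x. if \<exists>a. UDL x a \<in> U then (THE a. UDL x a \<in> U) else Deadline s x),
     Dir := (if \<exists>a. UDir a \<in> U then (THE a. UDir a \<in> U) else Dir s),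
     GateStatus := (if \<exists>a. UGS a \<in> U then (THE a. UGS a \<in> U) else GateStatus s)\<rparr>"

definition changes :: "'tr upd set \<Rightarrow> 'tr st \<Rightarrow> bool" where
  "changes U s \<longleftrightarrow>
     (\<exists>x a. UDL x a \<in> U \<and> Deadline s x \<noteq> a) \<or>
     (\<exists>a. UDir a \<in> U \<and> Dir s \<noteq> a) \<or>
     (\<exists>a. UGS a \<in> U \<and> GateStatus s \<noteq> a)"

text \<open>s(x) and SafeToOpen, evaluated in the state s with current time c.\<close>
definition safe_track :: "real \<Rightarrow> 'tr st \<Rightarrow> real \<Rightarrow> 'tr \<Rightarrow> bool" where
  "safe_track dopen s c x \<longleftrightarrow> TrackStatus s x = Empty \<or> ext_less (Fin (c + dopen)) (Deadline s x)"

definition SafeToOpen :: "'tr set \<Rightarrow> real \<Rightarrow> 'tr st \<Rightarrow> real \<Rightarrow> bool" where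
  "SafeToOpen T dopen s c \<longleftrightarrow> (\<forall>x\<in>T. safe_track dopen s c x)"

definition SignalOpen_guard :: "'tr set \<Rightarrow> real \<Rightarrow> 'tr st \<Rightarrow> real \<Rightarrow> bool" where
  "SignalOpen_guard T dopen s c \<longleftrightarrow> Dir s = Close \<and> SafeToOpen T dopen s c"

datatype agent = Gate | Controller

text \<open>Update set generated by a module in state s with CT = c
  (parameters: Tracks T, d_open, W = d_min - d_close).\<close>
definition upds :: "'tr set \<Rightarrow> real \<Rightarrow> real \<Rightarrow> agent \<Rightarrow> 'tr st \<Rightarrow> real \<Rightarrow> 'tr upd set" where
  "upds T dopen W A s c = (case A of
     Gate \<Rightarrow> (if Dir s = Open then {UGS Opened} else {}) \<union> (if Dir s = Close then {UGS Closed} else {})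
   | Controller \<Rightarrow>
       {UDL x (Fin (c + W)) | x. x \<in> T \<and> TrackStatus s x = Coming \<and> Deadline s x = Infty}
     \<union> {UDir Close | x. x \<in> T \<and> Deadline s x = Fin c}
     \<union> {UDL x Infty | x. x \<in> T \<and> TrackStatus s x = Empty \<and> Deadline s x \<noteq> Infty}
     \<union> (if SignalOpen_guard T dopen s c then {UDir Open} else {}))"

definition enabled :: "'tr set \<Rightarrow> real \<Rightarrow> real \<Rightarrow> agent \<Rightarrow> 'tr st \<Rightarrow> real \<Rightarrow> bool" where
  "enabled T dopen W A s c \<longleftrightarrow>
     consistent (upds T dopen W A s c) \<and> changes (upds T dopen W A s c) s"

definition exec :: "'tr set \<Rightarrow> real \<Rightarrow> real \<Rightarrow> agent set \<Rightarrow> 'tr st \<Rightarrow> real \<Rightarrow> 'tr st" where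
  "exec T dopen W M s c =
     apply_upd (\<Union>A\<in>{A\<in>M. consistent (upds T dopen W A s c)}. upds T dopen W A s c) s"

definition right_val :: "(real \<Rightarrow> 'a) \<Rightarrow> real \<Rightarrow> 'a \<Rightarrow> bool" where
  "right_val e t v \<longleftrightarrow> (\<exists>\<epsilon>>0. \<forall>u. t < u \<and> u < t + \<epsilon> \<longrightarrow> e u = v)"

definition left_val :: "(real \<Rightarrow> 'a) \<Rightarrow> real \<Rightarrow> 'a \<Rightarrow> bool" where
  "left_val e t v \<longleftrightarrow> (\<exists>\<epsilon>>0. \<forall>u. t - \<epsilon> < u \<and> u < t \<longrightarrow> e u = v)"

definition becomes :: "(real \<Rightarrow> 'a) \<Rightarrow> 'a \<Rightarrow> real \<Rightarrow> bool" where
  "becomes e a t \<longleftrightarrow>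
     ((\<exists>v. left_val e t v \<and> v \<noteq> a) \<and> e t = a) \<or> (e t \<noteq> a \<and> right_val e t a)"

text \<open>A run is given by R : time \<Rightarrow> CT-free state; R(t) has CT = t.
  rho R t is the CT-free reduct over the universe Tracks.\<close>
definition rho :: "'tr set \<Rightarrow> (real \<Rightarrow> 'tr st) \<Rightarrow> real \<Rightarrow> 'tr st" where
  "rho T R t = rst T (R t)"

definition pre_run :: "'tr set \<Rightarrow> (real \<Rightarrow> 'tr st) \<Rightarrow> bool" where
  "pre_run T R \<longleftrightarrow>
     (\<forall>\<tau>>0. \<exists>S. finite S \<and>
        (\<forall>u v. u < v \<and> {u..v} \<subseteq> {0..\<tau>} - S \<longrightarrow> rho T R u = rho T R v))"

definition fires :: "'tr set \<Rightarrow> real \<Rightarrow> real \<Rightarrow> (real \<Rightarrow> 'tr st) \<Rightarrow> agent \<Rightarrow> real \<Rightarrow> bool" where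
  "fires T dopen W R A t \<longleftrightarrow>
     (\<exists>v. right_val (rho T R) t v \<and> v \<noteq> rho T R t \<and>
          (\<exists>M. A \<in> M \<and> v = rst T (exec T dopen W M (R t) t)))"

definition is_run :: "'tr set \<Rightarrow> real \<Rightarrow> real \<Rightarrow> (real \<Rightarrow> 'tr st) \<Rightarrow> bool" where
  "is_run T dopen W R \<longleftrightarrow> pre_run T R \<and>
     (\<forall>t\<ge>0. \<forall>v. right_val (rho T R) t v \<and> v \<noteq> rho T R t \<longrightarrow>
        (\<exists>M. v = rst T (exec T dopen W M (R t) t)) \<and>
        TrackStatus v = TrackStatus (rho T R t)) \<and>
     (\<forall>t>0. \<forall>v. left_val (rho T R) t v \<and> v \<noteq> rho T R t \<longrightarrow>
        Deadline v = Deadline (rho T R t) \<and> Dir v = Dir (rho T R t) \<and>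
        GateStatus v = GateStatus (rho T R t))"

definition immediate :: "'tr set \<Rightarrow> real \<Rightarrow> real \<Rightarrow> (real \<Rightarrow> 'tr st) \<Rightarrow> agent \<Rightarrow> bool" where
  "immediate T dopen W R A \<longleftrightarrow>
     (\<forall>t\<ge>0. enabled T dopen W A (R t) t \<longrightarrow> fires T dopen W R A t)"

definition bounded :: "'tr set \<Rightarrow> real \<Rightarrow> real \<Rightarrow> (real \<Rightarrow> 'tr st) \<Rightarrow> agent \<Rightarrow> bool" where
  "bounded T dopen W R A \<longleftrightarrow> immediate T dopen W R A \<or>
     (\<exists>b>0. \<not> (\<exists>t\<ge>0. (\<forall>u. t < u \<and> u < t + b \<longrightarrow> enabled T dopen W A (R u) u) \<and>
                      (\<forall>u. t < u \<and> u < t + b \<longrightarrow> \<not> fires T dopen W R A u)))"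

definition initial_state :: "'tr set \<Rightarrow> 'tr st \<Rightarrow> bool" where
  "initial_state T s \<longleftrightarrow> (\<forall>x\<in>T. TrackStatus s x = Empty \<and> Deadline s x = Infty)"

definition train_phase :: "real \<Rightarrow> real \<Rightarrow> (real \<Rightarrow> tstat) \<Rightarrow> (nat \<Rightarrow> real) \<Rightarrow> nat \<Rightarrow> bool" where
  "train_phase dmin dmax f ts i \<longleftrightarrow>
     (\<forall>u. ts (3*i) \<le> u \<and> u < ts (3*i+1) \<longrightarrow> f u = Empty) \<and>
     (\<forall>u. ts (3*i+1) \<le> u \<and> u < ts (3*i+2) \<longrightarrow> f u = Coming) \<and>
     dmin \<le> ts (3*i+2) - ts (3*i+1) \<and> ts (3*i+2) - ts (3*i+1) \<le> dmax \<and>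
     (\<forall>u. ts (3*i+2) \<le> u \<and> u < ts (3*i+3) \<longrightarrow> f u = InCrossing)"

definition train_motion :: "real \<Rightarrow> real \<Rightarrow> (real \<Rightarrow> tstat) \<Rightarrow> bool" where
  "train_motion dmin dmax f \<longleftrightarrow> (\<exists>ts. ts 0 = 0 \<and>
     ((\<forall>n. ts n < ts (Suc n)) \<and> (\<forall>i. train_phase dmin dmax f ts i)
      \<or>
      (\<exists>k. 3 dvd k \<and> (\<forall>n<k. ts n < ts (Suc n)) \<and>
           (\<forall>i. 3*i+3 \<le> k \<longrightarrow> train_phase dmin dmax f ts i) \<and>
           (\<forall>u. ts k \<le> u \<longrightarrow> f u = Empty))))"

definition regular_run ::
  "'tr set \<Rightarrow> real \<Rightarrow> real \<Rightarrow> real \<Rightarrow> real \<Rightarrow> (real \<Rightarrow> 'tr st) \<Rightarrow> bool" where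
  "regular_run T dclose dopen dmin dmax R \<longleftrightarrow>
     (let W = dmin - dclose in
      is_run T dopen W R \<and> initial_state T (R 0) \<and>
      (\<forall>x\<in>T. train_motion dmin dmax (\<lambda>u. TrackStatus (R u) x)) \<and>
      immediate T dopen W R Controller \<and>
      bounded T dopen W R Gate \<and>
      \<not> (\<exists>t\<ge>0. \<forall>u. t < u \<and> u < t + dclose \<longrightarrow>
             Dir (R u) = Close \<and> GateStatus (R u) = Opened) \<and>
      \<not> (\<exists>t\<ge>0. \<forall>u. t < u \<and> u < t + dopen \<longrightarrow>
             Dir (R u) = Open \<and> GateStatus (R u) = Closed))"

definition SignalOpen_fires ::
  "'tr set \<Rightarrow> real \<Rightarrow> real \<Rightarrow> (real \<Rightarrow> 'tr st) \<Rightarrow> real \<Rightarrow> bool" where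
  "SignalOpen_fires T dopen W R t \<longleftrightarrow>
     fires T dopen W R Controller t \<and> SignalOpen_guard T dopen (R t) t"

end

theory Submission
  imports Defs
begin

text \<open>Since the controller fires as soon as it is enabled, the guard of SignalOpen never holds
  throughout a left neighbourhood of \<open>t\<close>; so it holds at \<open>t\<close> iff SafeToOpen has just become
  true while the direction is close. SafeToOpen cannot become true by a jump just after \<open>t\<close>,
  because an occupied track keeps its status and deadline across jumps; it becomes true at \<open>t\<close>
  only when a track whose deadline is imminent empties, i.e. when a train leaves the crossing.
  That train's deadline \<open>a + W\<close>, set when it appeared at \<open>a\<close>, expired before it could reach
  the crossing (\<open>W < dmin\<close>); the controller then signalled close, and the unsafe track has
  prevented reopening ever since. Conversely the guard forces every deadline to differ from \<open>t\<close>
  (a deadline \<open>t\<close> would belong to a train that has just left, whose deadline lies strictly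
  before \<open>t\<close>), so the controller's updates are consistent and it fires.\<close>

section \<open>One-sided values and induction over a real interval\<close>

lemma right_val_eventually:
  "right_val f t v \<longleftrightarrow> eventually (\<lambda>u. f u = v) (at_right t)"
  unfolding right_val_def eventually_at_right_field
proof safe
  fix \<epsilon> :: real assume "0 < \<epsilon>" "\<forall>u. t < u \<and> u < t + \<epsilon> \<longrightarrow> f u = v"
  then show "\<exists>b>t. \<forall>u>t. u < b \<longrightarrow> f u = v"
    by (intro exI[of _ "t + \<epsilon>"]) auto
next
  fix b assume "t < b" "\<forall>u>t. u < b \<longrightarrow> f u = v"
  then show "\<exists>\<epsilon>>0. \<forall>u. t < u \<and> u < t + \<epsilon> \<longrightarrow> f u = v"
    by (intro exI[of _ "b - t"]) auto
qed

lemma left_val_eventually: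
  "left_val f t v \<longleftrightarrow> eventually (\<lambda>u. f u = v) (at_left t)"
  unfolding left_val_def eventually_at_left_field
proof safe
  fix \<epsilon> :: real assume "0 < \<epsilon>" "\<forall>u. t - \<epsilon> < u \<and> u < t \<longrightarrow> f u = v"
  then show "\<exists>b<t. \<forall>u>b. u < t \<longrightarrow> f u = v"
    by (intro exI[of _ "t - \<epsilon>"]) auto
next
  fix b assume "b < t" "\<forall>u>b. u < t \<longrightarrow> f u = v"
  then show "\<exists>\<epsilon>>0. \<forall>u. t - \<epsilon> < u \<and> u < t \<longrightarrow> f u = v"
    by (intro exI[of _ "t - b"]) auto
qed

lemma right_val_unique:
  assumes "right_val f t v" "right_val f t w"
  shows "v = w"
proof -
  have "eventually (\<lambda>u. v = w) (at_right t)"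
    using assms unfolding right_val_eventually by eventually_elim simp
  then show ?thesis
    by simp
qed

lemma eventually_at_right_locally_constant:
  fixes f :: "real \<Rightarrow> 'a"
  assumes "eventually (\<lambda>u. f u = v) (at_right t)"
  shows "eventually (\<lambda>u. eventually (\<lambda>w. f w = f u) (at_right u)) (at_right t)"
proof -
  obtain b where "t < b" and const: "\<And>u. t < u \<Longrightarrow> u < b \<Longrightarrow> f u = v"
    using assms unfolding eventually_at_right_field by blast
  have "eventually (\<lambda>w. f w = f u) (at_right u)" if "t < u" "u < b" for u
    using that const by (intro eventually_at_rightI[of u b]) auto
  then show ?thesis
    using \<open>t < b\<close> by (intro eventually_at_rightI[of t b]) auto
qed

lemma eventually_at_left_locally_constant:
  fixes f :: "real \<Rightarrow> 'a"
  assumes "eventually (\<lambda>u. f u = v) (at_left t)"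
  shows "eventually (\<lambda>u. eventually (\<lambda>w. f w = f u) (at_right u)) (at_left t)"
proof -
  obtain b where "b < t" and const: "\<And>u. b < u \<Longrightarrow> u < t \<Longrightarrow> f u = v"
    using assms unfolding eventually_at_left_field by blast
  have "eventually (\<lambda>w. f w = f u) (at_right u)" if "b < u" "u < t" for u
    using that const by (intro eventually_at_rightI[of u t]) auto
  then show ?thesis
    using \<open>b < t\<close> by (intro eventually_at_leftI[of b t]) auto
qed

lemma real_interval_induct:
  fixes p q :: real
  assumes "p \<le> q" "P p"
    and right: "\<And>s. p \<le> s \<Longrightarrow> s < q \<Longrightarrow> P s \<Longrightarrow> eventually P (at_right s)"
    and left: "\<And>s. p < s \<Longrightarrow> s \<le> q \<Longrightarrow> eventually P (at_left s) \<Longrightarrow> P s"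
  shows "\<forall>s\<in>{p..q}. P s"
proof -
  define A where "A = {r\<in>{p..q}. \<forall>u\<in>{p..r}. P u}"
  define m where "m = Sup A"
  have "p \<in> A" "bdd_above A"
    using assms(1,2) by (auto simp: A_def bdd_above_def)
  then have "p \<le> m"
    unfolding m_def by (rule cSup_upper)
  have "m \<le> q"
    unfolding m_def using \<open>p \<in> A\<close> by (intro cSup_least) (auto simp: A_def)
  have below: "P u" if "p \<le> u" "u < m" for u
  proof -
    obtain r where "r \<in> A" "u < r"
      using less_cSup_iff[of A u] \<open>p \<in> A\<close> \<open>bdd_above A\<close> \<open>u < m\<close> m_def by blast
    then show ?thesis
      using that by (auto simp: A_def)
  qed
  have "P m"
  proof (cases "m = p")
    case False
    then have "eventually P (at_left m)"
      using \<open>p \<le> m\<close> below by (intro eventually_at_leftI[of p m]) auto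
    then show ?thesis
      using left False \<open>p \<le> m\<close> \<open>m \<le> q\<close> by simp
  qed (use assms in simp)
  then have "m \<in> A"
    using below \<open>p \<le> m\<close> \<open>m \<le> q\<close> by (force simp: A_def)
  have "m = q"
  proof (rule ccontr)
    assume "m \<noteq> q"
    with \<open>m \<le> q\<close> have "m < q" by simp
    then obtain b where "m < b" and after: "\<And>u. m < u \<Longrightarrow> u < b \<Longrightarrow> P u"
      using right[OF \<open>p \<le> m\<close> _ \<open>P m\<close>] unfolding eventually_at_right_field by blast
    define r where "r = min q ((m + b) / 2)"
    have "m < r" "r \<le> q"
      using \<open>m < q\<close> \<open>m < b\<close> by (auto simp: r_def)
    moreover have "P u" if "p \<le> u" "u \<le> r" for u
      using that below \<open>P m\<close> after[of u] \<open>m < b\<close>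
      by (cases u m rule: linorder_cases) (auto simp: r_def)
    ultimately have "r \<in> A"
      using \<open>p \<le> m\<close> by (auto simp: A_def)
    then show False
      using \<open>m < r\<close> \<open>bdd_above A\<close> cSup_upper m_def by fastforce
  qed
  then show ?thesis
    using \<open>m \<in> A\<close> by (auto simp: A_def)
qed

lemma eventually_not_in_finite:
  fixes S :: "'a::t1_space set"
  assumes "finite S"
  shows "eventually (\<lambda>u. u \<notin> S) (at x within A)"
proof -
  have "eventually (\<lambda>u. \<forall>d\<in>S. u \<noteq> d) (at x within A)"
    using assms by (rule eventually_ball_finite) (simp add: eventually_neq_at_within)
  then show ?thesis
    by (rule eventually_mono) blast
qed

lemma eventually_at_right_witness:
  fixes t q :: real
  assumes "eventually P (at_right t)" "t < q"
  obtains u where "t < u" "u < q" "P u"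
proof -
  have "eventually (\<lambda>u. t < u \<and> u < q \<and> P u) (at_right t)"
    using assms eventually_at_right_less[of t]
    by (intro eventually_conj) (auto simp: eventually_at_right_field)
  with that show ?thesis
    using eventually_happens'[OF trivial_limit_at_right_real] by blast
qed

lemma eventually_at_left_witness:
  fixes t q :: real
  assumes "eventually P (at_left t)" "q < t"
  obtains u where "q < u" "u < t" "P u"
proof -
  have "eventually (\<lambda>u. q < u \<and> u < t \<and> P u) (at_left t)"
    using assms by (intro eventually_conj) (auto simp: eventually_at_left_field)
  with that show ?thesis
    using eventually_happens'[OF trivial_limit_at_left_real] by blast
qed

section \<open>Piecewise constancy of pre-runs\<close>

lemma constant_on_open_interval:
  fixes f :: "real \<Rightarrow> 'a"
  assumes "\<forall>u v. u < v \<and> {u..v} \<subseteq> X \<longrightarrow> f u = f v" "{l<..<r} \<subseteq> X"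
    and "u \<in> {l<..<r}" "w \<in> {l<..<r}"
  shows "f u = f w"
proof (cases u w rule: linorder_cases)
  case less
  have "{u..w} \<subseteq> {l<..<r}"
    using assms(3,4) by auto
  with less assms(1,2) show ?thesis
    by blast
next
  case greater
  have "{w..u} \<subseteq> {l<..<r}"
    using assms(3,4) by auto
  with greater assms(1,2) show ?thesis
    by (metis subset_trans)
qed simp

lemma pre_run_right_val:
  assumes "pre_run T R" "0 \<le> t"
  obtains v where "right_val (rho T R) t v"
proof -
  obtain S where "finite S"
    and const: "\<forall>u v. u < v \<and> {u..v} \<subseteq> {0..t + 1} - S \<longrightarrow> rho T R u = rho T R v"
    using assms unfolding pre_run_def by (meson add_nonneg_pos zero_less_one)
  have "eventually (\<lambda>u. u \<notin> S \<and> u < t + 1) (at_right t)"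
    using eventually_not_in_finite[OF \<open>finite S\<close>] eventually_at_right_less[of t]
    by (intro eventually_conj) (auto simp: eventually_at_right_field intro: exI[of _ "t + 1"])
  then obtain c where "t < c" and "\<And>u. t < u \<Longrightarrow> u < c \<Longrightarrow> u \<notin> S \<and> u < t + 1"
    unfolding eventually_at_right_field by blast
  with \<open>0 \<le> t\<close> have "{t<..<c} \<subseteq> {0..t + 1} - S"
    by force
  with \<open>t < c\<close> have "right_val (rho T R) t (rho T R ((t + c) / 2))"
    unfolding right_val_eventually
    by (intro eventually_at_rightI[of t c] constant_on_open_interval[OF const]) auto
  then show ?thesis
    by (rule that)
qed

lemma pre_run_left_val:
  assumes "pre_run T R" "0 < t"
  obtains v where "left_val (rho T R) t v"
proof -
  obtain S where "finite S"
    and const: "\<forall>u v. u < v \<and> {u..v} \<subseteq> {0..t} - S \<longrightarrow> rho T R u = rho T R v"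
    using assms unfolding pre_run_def by blast
  have "eventually (\<lambda>u. u \<notin> S \<and> 0 < u) (at_left t)"
    using eventually_not_in_finite[OF \<open>finite S\<close>] \<open>0 < t\<close>
    by (intro eventually_conj) (auto simp: eventually_at_left_field)
  then obtain c where "c < t" and "\<And>u. c < u \<Longrightarrow> u < t \<Longrightarrow> u \<notin> S \<and> 0 < u"
    unfolding eventually_at_left_field by blast
  then have "{c<..<t} \<subseteq> {0..t} - S"
    by force
  with \<open>c < t\<close> have "left_val (rho T R) t (rho T R ((c + t) / 2))"
    unfolding left_val_eventually
    by (intro eventually_at_leftI[of c t] constant_on_open_interval[OF const]) auto
  then show ?thesis
    by (rule that)
qed

lemma pre_run_left_continuous_except_finite:
  assumes "pre_run T R"
  obtains S where "finite S" "\<And>u. u \<in> {0<..\<tau>} - S \<Longrightarrow> left_val (rho T R) u (rho T R u)"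
proof (cases "0 < \<tau>")
  case True
  then obtain S where "finite S"
    and const: "\<forall>u v. u < v \<and> {u..v} \<subseteq> {0..\<tau>} - S \<longrightarrow> rho T R u = rho T R v"
    using assms unfolding pre_run_def by blast
  have "left_val (rho T R) u (rho T R u)" if u: "u \<in> {0<..\<tau>} - S" for u
  proof -
    have "eventually (\<lambda>w. w \<notin> S \<and> 0 < w) (at_left u)"
      using eventually_not_in_finite[OF \<open>finite S\<close>] u
      by (intro eventually_conj) (auto simp: eventually_at_left_field)
    then obtain c where "c < u" and gap: "\<And>w. c < w \<Longrightarrow> w < u \<Longrightarrow> w \<notin> S \<and> 0 < w"
      unfolding eventually_at_left_field by blast
    have "rho T R w = rho T R u" if "c < w" "w < u" for w
    proof -
      have "{w..u} \<subseteq> {0..\<tau>} - S"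
      proof
        fix z assume "z \<in> {w..u}"
        then show "z \<in> {0..\<tau>} - S"
          using gap[of z] u \<open>c < w\<close> by (cases "z = u") auto
      qed
      then show ?thesis
        using const \<open>w < u\<close> by blast
    qed
    then show ?thesis
      unfolding left_val_eventually using \<open>c < u\<close> by (intro eventually_at_leftI[of c u]) auto
  qed
  with \<open>finite S\<close> show ?thesis
    by (rule that)
qed (use that in auto)

section \<open>States, update sets and their execution\<close>

lemma rst_simps [simp]:
  "TrackStatus (rst T s) x = (if x \<in> T then TrackStatus s x else Empty)"
  "Deadline (rst T s) x = (if x \<in> T then Deadline s x else Infty)"
  "Dir (rst T s) = Dir s"
  by (simp_all add: rst_def)

lemma rho_simps [simp]:
  "x \<in> T \<Longrightarrow> TrackStatus (rho T R u) x = TrackStatus (R u) x"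
  "x \<in> T \<Longrightarrow> Deadline (rho T R u) x = Deadline (R u) x"
  "Dir (rho T R u) = Dir (R u)"
  by (simp_all add: rho_def)

lemma rho_eqD:
  assumes "rho T R u = v"
  shows "x \<in> T \<Longrightarrow> TrackStatus (R u) x = TrackStatus v x"
    and "x \<in> T \<Longrightarrow> Deadline (R u) x = Deadline v x"
    and "Dir (R u) = Dir v"
  using assms by auto

lemma eventually_rho_eqD:
  assumes "eventually (\<lambda>u. rho T R u = v) F"
  shows "x \<in> T \<Longrightarrow> eventually (\<lambda>u. TrackStatus (R u) x = TrackStatus v x) F"
    and "x \<in> T \<Longrightarrow> eventually (\<lambda>u. Deadline (R u) x = Deadline v x) F"
    and "eventually (\<lambda>u. Dir (R u) = Dir v) F"
  using assms by (auto elim!: eventually_mono intro: rho_eqD)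

lemma not_SafeToOpenI:
  "x \<in> T \<Longrightarrow> TrackStatus s x \<noteq> Empty \<Longrightarrow> Deadline s x = Fin d \<Longrightarrow> d \<le> c + dopen \<Longrightarrow>
     \<not> SafeToOpen T dopen s c"
  by (auto simp: SafeToOpen_def safe_track_def)

lemma not_SafeToOpenE:
  assumes "\<not> SafeToOpen T dopen s c"
  obtains x d where "x \<in> T" "TrackStatus s x \<noteq> Empty" "Deadline s x = Fin d" "d \<le> c + dopen"
proof -
  obtain x where "x \<in> T" "TrackStatus s x \<noteq> Empty" "\<not> ext_less (Fin (c + dopen)) (Deadline s x)"
    using assms by (auto simp: SafeToOpen_def safe_track_def)
  with that show ?thesis
    by (cases "Deadline s x") auto
qed

lemma UDir_in_upds:
  "UDir a \<in> upds T dopen W A s c \<Longrightarrow> A = Controller \<and>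
     (a = Close \<and> (\<exists>y\<in>T. Deadline s y = Fin c) \<or> a = Open \<and> SignalOpen_guard T dopen s c)"
  by (cases A) (auto simp: upds_def if_split_mem2)

lemma UDL_in_upds:
  "UDL x a \<in> upds T dopen W A s c \<Longrightarrow>
     TrackStatus s x = Coming \<and> Deadline s x = Infty \<and> a = Fin (c + W) \<or>
     TrackStatus s x = Empty \<and> Deadline s x \<noteq> Infty \<and> a = Infty"
  by (cases A) (auto simp: upds_def if_split_mem2)

lemma consistent_controller_upds:
  "\<not> (SignalOpen_guard T dopen s c \<and> (\<exists>y\<in>T. Deadline s y = Fin c)) \<Longrightarrow>
     consistent (upds T dopen W Controller s c)"
  unfolding consistent_def upds_def by auto

lemma unchanged_controller_clears_deadline:
  "\<not> changes (upds T dopen W Controller s c) s \<Longrightarrow> x \<in> T \<Longrightarrow> TrackStatus s x = Empty \<Longrightarrow>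
     Deadline s x = Infty"
  unfolding changes_def upds_def by auto

lemma unchanged_controller_sets_deadline:
  assumes "\<not> changes (upds T dopen W Controller s c) s" "x \<in> T" "TrackStatus s x = Coming"
  shows "Deadline s x \<noteq> Infty"
proof
  assume "Deadline s x = Infty"
  with assms(2,3) have "UDL x (Fin (c + W)) \<in> upds T dopen W Controller s c"
    by (auto simp: upds_def)
  with \<open>Deadline s x = Infty\<close> assms(1) show False
    by (force simp: changes_def)
qed

lemma unchanged_controller_no_guard:
  "\<not> changes (upds T dopen W Controller s c) s \<Longrightarrow> \<not> SignalOpen_guard T dopen s c"
  unfolding changes_def upds_def SignalOpen_guard_def by auto

lemma unchanged_controller_closes:
  assumes "\<not> changes (upds T dopen W Controller s c) s" "x \<in> T" "Deadline s x = Fin c"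
  shows "Dir s = Close"
proof (rule ccontr)
  assume "Dir s \<noteq> Close"
  moreover from assms(2,3) have "UDir Close \<in> upds T dopen W Controller s c"
    by (auto simp: upds_def)
  ultimately show False
    using assms(1) unfolding changes_def by blast
qed

lemma Deadline_apply_upd:
  assumes "\<And>a. UDL x a \<in> U \<Longrightarrow> a = b"
  shows "Deadline (apply_upd U s) x = (if UDL x b \<in> U then b else Deadline s x)"
proof -
  have "(\<exists>a. UDL x a \<in> U) \<longleftrightarrow> UDL x b \<in> U"
    using assms by blast
  moreover have "(THE a. UDL x a \<in> U) = b" if "UDL x b \<in> U"
    using assms that by (rule the_equality[rotated])
  ultimately show ?thesis
    by (simp add: apply_upd_def)
qed

lemma Dir_apply_upd:
  assumes "\<And>a. UDir a \<in> U \<Longrightarrow> a = b"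
  shows "Dir (apply_upd U s) = (if UDir b \<in> U then b else Dir s)"
proof -
  have "(\<exists>a. UDir a \<in> U) \<longleftrightarrow> UDir b \<in> U"
    using assms by blast
  moreover have "(THE a. UDir a \<in> U) = b" if "UDir b \<in> U"
    using assms that by (rule the_equality[rotated])
  ultimately show ?thesis
    by (simp add: apply_upd_def)
qed

lemma TrackStatus_exec [simp]: "TrackStatus (exec T dopen W M s c) = TrackStatus s"
  by (simp add: exec_def apply_upd_def)

lemma Deadline_exec:
  "Deadline (exec T dopen W M s c) x = Deadline s x \<or>
   TrackStatus s x = Coming \<and> Deadline s x = Infty \<and> Deadline (exec T dopen W M s c) x = Fin (c + W) \<or>
   TrackStatus s x = Empty \<and> Deadline s x \<noteq> Infty \<and> Deadline (exec T dopen W M s c) x = Infty"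
proof -
  define U where "U = (\<Union>A\<in>{A\<in>M. consistent (upds T dopen W A s c)}. upds T dopen W A s c)"
  define b where "b = (if TrackStatus s x = Coming then Fin (c + W) else Infty)"
  have "UDL x a \<in> U \<Longrightarrow>
      TrackStatus s x = Coming \<and> Deadline s x = Infty \<and> a = Fin (c + W) \<or>
      TrackStatus s x = Empty \<and> Deadline s x \<noteq> Infty \<and> a = Infty" for a
    unfolding U_def by (blast dest: UDL_in_upds)
  moreover from this have "Deadline (exec T dopen W M s c) x = (if UDL x b \<in> U then b else Deadline s x)"
    unfolding exec_def U_def[symmetric] by (intro Deadline_apply_upd) (auto simp: b_def)
  ultimately show ?thesis
    by (auto simp: b_def)
qed

lemma Dir_exec:
  assumes "\<not> SignalOpen_guard T dopen s c"
  shows "Dir (exec T dopen W M s c) =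
    (if Controller \<in> M \<and> (\<exists>y\<in>T. Deadline s y = Fin c) then Close else Dir s)"
proof -
  define U where "U = (\<Union>A\<in>{A\<in>M. consistent (upds T dopen W A s c)}. upds T dopen W A s c)"
  have "a = Close" if a: "UDir a \<in> U" for a
  proof -
    obtain A where "UDir a \<in> upds T dopen W A s c"
      using a unfolding U_def by blast
    from UDir_in_upds[OF this] show ?thesis
      using assms by auto
  qed
  then have "Dir (exec T dopen W M s c) = (if UDir Close \<in> U then Close else Dir s)"
    unfolding exec_def U_def[symmetric] by (rule Dir_apply_upd)
  moreover have "UDir Close \<in> U \<longleftrightarrow> Controller \<in> M \<and> (\<exists>y\<in>T. Deadline s y = Fin c)"
  proof
    assume "UDir Close \<in> U"
    then obtain A where "A \<in> M" and A: "UDir Close \<in> upds T dopen W A s c"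
      unfolding U_def by blast
    with UDir_in_upds[OF A] show "Controller \<in> M \<and> (\<exists>y\<in>T. Deadline s y = Fin c)"
      by auto
  next
    assume hit: "Controller \<in> M \<and> (\<exists>y\<in>T. Deadline s y = Fin c)"
    then have "UDir Close \<in> upds T dopen W Controller s c"
      by (auto simp: upds_def)
    moreover have "consistent (upds T dopen W Controller s c)"
      using assms by (intro consistent_controller_upds) simp
    ultimately show "UDir Close \<in> U"
      unfolding U_def using hit by blast
  qed
  ultimately show ?thesis
    by simp
qed

section \<open>Train motion\<close>

definition train_visit :: "real \<Rightarrow> (real \<Rightarrow> tstat) \<Rightarrow> real \<Rightarrow> real \<Rightarrow> real \<Rightarrow> real \<Rightarrow> bool" where
  "train_visit dmin f c a b d \<longleftrightarrow> 0 \<le> c \<and> c < a \<and> a + dmin \<le> b \<and> b \<le> d \<and>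
     (\<forall>u\<in>{c..<a}. f u = Empty) \<and> (\<forall>u\<in>{a..<b}. f u = Coming) \<and> (\<forall>u\<in>{a..<d}. f u \<noteq> Empty)"

lemma prefix_mono:
  fixes ts :: "nat \<Rightarrow> real"
  assumes "\<And>k. k < N \<Longrightarrow> ts k < ts (Suc k)" "m \<le> n" "n \<le> N"
  shows "ts m \<le> ts n"
  using assms(2,3)
proof (induction n rule: dec_induct)
  case (step k)
  then show ?case
    using assms(1)[of k] by simp
qed simp

lemma seq_interval_containing:
  fixes ts :: "nat \<Rightarrow> real"
  assumes "ts 0 \<le> u" "u < ts m"
  shows "\<exists>n<m. ts n \<le> u \<and> u < ts (Suc n)"
  using assms(2)
proof (induction m)
  case (Suc m)
  then show ?case
    by (cases "u < ts m") (auto intro: less_SucI simp: not_less)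
qed (use assms(1) in simp)

lemma train_visit_in_prefix:
  fixes f :: "real \<Rightarrow> tstat" and ts :: "nat \<Rightarrow> real"
  assumes "ts 0 = 0" and incr: "\<And>k. k < N \<Longrightarrow> ts k < ts (Suc k)"
    and phases: "\<And>i. 3 * i + 3 \<le> N \<Longrightarrow> train_phase dmin dmax f ts i"
    and "3 dvd N" "0 \<le> u" "u < ts N" "f u \<noteq> Empty"
  shows "\<exists>c a b d. train_visit dmin f c a b d \<and> a \<le> u \<and> u < d"
proof -
  obtain n where "n < N" "ts n \<le> u" "u < ts (Suc n)"
    using seq_interval_containing[of ts u N] assms(1,5,6) by auto
  define i where "i = n div 3"
  have "3 * i + 3 \<le> N"
    using \<open>n < N\<close> \<open>3 dvd N\<close> unfolding i_def by presburger
  then have phase: "train_phase dmin dmax f ts i"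
    by (rule phases)
  have mono: "ts k \<le> ts l" if "k \<le> l" "l \<le> N" for k l
    using prefix_mono[of N ts, OF incr that] .
  have "n mod 3 \<noteq> 0"
  proof
    assume "n mod 3 = 0"
    then have "n = 3 * i"
      unfolding i_def by presburger
    then show False
      using phase \<open>ts n \<le> u\<close> \<open>u < ts (Suc n)\<close> \<open>f u \<noteq> Empty\<close> by (simp add: train_phase_def)
  qed
  then have "3 * i + 1 \<le> n" "Suc n \<le> 3 * i + 3"
    unfolding i_def by presburger+
  have "train_visit dmin f (ts (3 * i)) (ts (3 * i + 1)) (ts (3 * i + 2)) (ts (3 * i + 3))"
    unfolding train_visit_def
  proof (intro conjI ballI)
    show "0 \<le> ts (3 * i)"
      using mono[of 0 "3 * i"] \<open>3 * i + 3 \<le> N\<close> assms(1) by simp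
    show "ts (3 * i) < ts (3 * i + 1)"
      using incr[of "3 * i"] \<open>3 * i + 3 \<le> N\<close> by simp
    show "ts (3 * i + 2) \<le> ts (3 * i + 3)"
      using mono[of "3 * i + 2" "3 * i + 3"] \<open>3 * i + 3 \<le> N\<close> by simp
    fix w assume "w \<in> {ts (3 * i + 1)..<ts (3 * i + 3)}"
    then show "f w \<noteq> Empty"
      using phase by (cases "w < ts (3 * i + 2)") (auto simp: train_phase_def)
  qed (use phase in \<open>auto simp: train_phase_def\<close>)
  moreover have "ts (3 * i + 1) \<le> u" "u < ts (3 * i + 3)"
    using mono[of "3 * i + 1" n] mono[of "Suc n" "3 * i + 3"] \<open>3 * i + 1 \<le> n\<close> \<open>Suc n \<le> 3 * i + 3\<close>
      \<open>n < N\<close> \<open>3 * i + 3 \<le> N\<close> \<open>ts n \<le> u\<close> \<open>u < ts (Suc n)\<close>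
    by linarith+
  ultimately show ?thesis
    by blast
qed

text \<open>Each arrival time \<open>ts (3 * i + 1)\<close> is a left discontinuity of \<open>f\<close>, and only finitely
  many of those lie in \<open>{0<..\<tau>}\<close>.\<close>

lemma significant_moments_unbounded:
  fixes f :: "real \<Rightarrow> tstat" and ts :: "nat \<Rightarrow> real"
  assumes "ts 0 = 0" "\<And>n. ts n < ts (Suc n)" "\<And>i. train_phase dmin dmax f ts i"
    and "finite S" "\<And>u. u \<in> {0<..\<tau>} - S \<Longrightarrow> left_val f u (f u)"
  shows "\<exists>m. \<tau> < ts m"
proof (rule ccontr)
  assume "\<not> (\<exists>m. \<tau> < ts m)"
  then have bounded: "ts m \<le> \<tau>" for m
    by (simp add: not_less)
  have incr: "strict_mono ts"
    using assms(2) by (simp add: strict_mono_Suc_iff)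
  have "ts (3 * i + 1) \<in> S" for i
  proof (rule ccontr)
    let ?a = "ts (3 * i + 1)"
    assume "?a \<notin> S"
    moreover have "0 < ?a"
      using strict_monoD[OF incr, of 0 "3 * i + 1"] assms(1) by simp
    ultimately have "eventually (\<lambda>u. f u = f ?a) (at_left ?a)"
      using assms(5) bounded by (simp add: left_val_eventually)
    moreover have "eventually (\<lambda>u. f u = Empty) (at_left ?a)"
      using assms(3)[of i] assms(2)[of "3 * i"]
      by (intro eventually_at_leftI[of "ts (3 * i)"]) (auto simp: train_phase_def)
    ultimately have "eventually (\<lambda>u. f ?a = Empty) (at_left ?a)"
      by eventually_elim simp
    moreover have "f ?a = Coming"
      using assms(3)[of i] assms(2)[of "3 * i + 1"] by (simp add: train_phase_def)
    ultimately show False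
      by simp
  qed
  then have "finite (range (\<lambda>i. ts (3 * i + 1)))"
    using \<open>finite S\<close> by (auto intro: finite_subset)
  moreover have "strict_mono (\<lambda>i. ts (3 * i + 1))"
    by (rule strict_monoI) (simp add: strict_monoD[OF incr])
  then have "inj (\<lambda>i. ts (3 * i + 1))"
    by (rule strict_mono_imp_inj_on)
  ultimately show False
    using finite_imageD by fastforce
qed

lemma train_motion_visit:
  fixes f :: "real \<Rightarrow> tstat"
  assumes "train_motion dmin dmax f"
    and "finite S" "\<And>u. u \<in> {0<..\<tau>} - S \<Longrightarrow> left_val f u (f u)"
    and "0 \<le> u" "u \<le> \<tau>" "f u \<noteq> Empty"
  shows "\<exists>c a b d. train_visit dmin f c a b d \<and> a \<le> u \<and> u < d"
proof -
  obtain ts where "ts 0 = 0" and motion: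
    "(\<forall>n. ts n < ts (Suc n)) \<and> (\<forall>i. train_phase dmin dmax f ts i) \<or>
     (\<exists>k. 3 dvd k \<and> (\<forall>n<k. ts n < ts (Suc n)) \<and> (\<forall>i. 3 * i + 3 \<le> k \<longrightarrow> train_phase dmin dmax f ts i) \<and>
          (\<forall>u. ts k \<le> u \<longrightarrow> f u = Empty))"
    using assms(1) unfolding train_motion_def by blast
  have "\<exists>N. 3 dvd N \<and> (\<forall>k<N. ts k < ts (Suc k)) \<and> (\<forall>i. 3 * i + 3 \<le> N \<longrightarrow> train_phase dmin dmax f ts i) \<and>
      u < ts N"
    using motion
  proof
    assume infinite: "(\<forall>n. ts n < ts (Suc n)) \<and> (\<forall>i. train_phase dmin dmax f ts i)"
    have "\<exists>m. \<tau> < ts m"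
      by (rule significant_moments_unbounded[where S = S]) (use infinite \<open>ts 0 = 0\<close> assms(2,3) in auto)
    then obtain m where "\<tau> < ts m"
      by blast
    have "strict_mono ts"
      using infinite by (simp add: strict_mono_Suc_iff)
    then have "ts m \<le> ts (3 * m)"
      by (rule strict_mono_leD) simp
    with \<open>u \<le> \<tau>\<close> \<open>\<tau> < ts m\<close> have "u < ts (3 * m)"
      by linarith
    with infinite show ?thesis
      by (intro exI[of _ "3 * m"]) simp
  next
    assume "\<exists>k. 3 dvd k \<and> (\<forall>n<k. ts n < ts (Suc n)) \<and>
      (\<forall>i. 3 * i + 3 \<le> k \<longrightarrow> train_phase dmin dmax f ts i) \<and> (\<forall>u. ts k \<le> u \<longrightarrow> f u = Empty)"
    then obtain k where k: "3 dvd k" "\<forall>n<k. ts n < ts (Suc n)"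
      "\<forall>i. 3 * i + 3 \<le> k \<longrightarrow> train_phase dmin dmax f ts i" "\<forall>u. ts k \<le> u \<longrightarrow> f u = Empty"
      by blast
    have "u < ts k"
    proof (rule ccontr)
      assume "\<not> u < ts k"
      with k(4) \<open>f u \<noteq> Empty\<close> show False
        by simp
    qed
    with k show ?thesis
      by blast
  qed
  then obtain N where N: "3 dvd N" "\<forall>k<N. ts k < ts (Suc k)"
    "\<forall>i. 3 * i + 3 \<le> N \<longrightarrow> train_phase dmin dmax f ts i" "u < ts N"
    by blast
  show ?thesis
    by (rule train_visit_in_prefix[where ts = ts and N = N]) (use N \<open>ts 0 = 0\<close> assms(4,6) in auto)
qed

section \<open>Runs with an immediate controller\<close>

locale controller_run =
  fixes T :: "'tr set" and dopen W :: real and R :: "real \<Rightarrow> 'tr st"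
  assumes finite_tracks: "finite T"
    and run: "is_run T dopen W R"
    and controller_immediate: "immediate T dopen W R Controller"
begin

abbreviation controller_idle :: "real \<Rightarrow> bool" where
  "controller_idle u \<equiv> \<not> changes (upds T dopen W Controller (R u) u) (R u)"

lemma pre_run: "pre_run T R"
  using run by (simp add: is_run_def)

lemma right_jump:
  assumes "0 \<le> t" "right_val (rho T R) t v"
  shows "v = rho T R t \<or> (\<exists>M. v = rst T (exec T dopen W M (R t) t))"
  using conjunct1[OF conjunct2[OF run[unfolded is_run_def]], rule_format, of t v] assms by blast

lemma left_jump:
  assumes "0 < t" "left_val (rho T R) t v"
  shows "Deadline v = Deadline (rho T R t)" "Dir v = Dir (rho T R t)"
  using conjunct2[OF conjunct2[OF run[unfolded is_run_def]], rule_format, of t v] assms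
  by (cases "v = rho T R t"; simp)+

lemma controller_fires:
  assumes "0 \<le> u" "\<not> (SignalOpen_guard T dopen (R u) u \<and> (\<exists>y\<in>T. Deadline (R u) y = Fin u))"
    and "\<not> controller_idle u"
  shows "fires T dopen W R Controller u"
proof -
  have "enabled T dopen W Controller (R u) u"
    using consistent_controller_upds[OF assms(2)] assms(3) by (simp add: enabled_def)
  with controller_immediate assms(1) show ?thesis
    unfolding immediate_def by blast
qed

lemma idle_if_constant_after:
  assumes "0 \<le> u" "\<forall>y\<in>T. Deadline (R u) y \<noteq> Fin u"
    and "eventually (\<lambda>w. rho T R w = rho T R u) (at_right u)"
  shows "controller_idle u"
proof (rule ccontr)
  assume "\<not> controller_idle u"
  with assms(1,2) have "fires T dopen W R Controller u"
    by (intro controller_fires) auto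
  then obtain v where v: "right_val (rho T R) u v" "v \<noteq> rho T R u"
    unfolding fires_def by auto
  from assms(3) have "right_val (rho T R) u (rho T R u)"
    by (simp add: right_val_eventually)
  with v(1) have "v = rho T R u"
    by (rule right_val_unique)
  with v(2) show False ..
qed

lemma eventually_no_deadline_due:
  assumes "eventually (\<lambda>u. rho T R u = v) (at t within A)"
  shows "eventually (\<lambda>u. \<forall>y\<in>T. Deadline (R u) y \<noteq> Fin u) (at t within A)"
proof (intro eventually_ball_finite finite_tracks ballI)
  fix y assume "y \<in> T"
  have "eventually (\<lambda>u. rho T R u = v \<and> Deadline v y \<noteq> Fin u) (at t within A)"
  proof (cases "Deadline v y")
    case (Fin d)
    from assms eventually_neq_at_within[of d t A] show ?thesis
      by eventually_elim (simp add: Fin)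
  qed (use assms in simp)
  then show "eventually (\<lambda>u. Deadline (R u) y \<noteq> Fin u) (at t within A)"
    by (rule eventually_mono) (use \<open>y \<in> T\<close> in auto)
qed

lemma eventually_idle_at_right:
  assumes "0 \<le> t" "right_val (rho T R) t v"
  shows "eventually (\<lambda>u. rho T R u = v \<and> controller_idle u) (at_right t)"
proof -
  have const: "eventually (\<lambda>u. rho T R u = v) (at_right t)"
    using assms(2) by (simp add: right_val_eventually)
  with eventually_at_right_less[of t] eventually_no_deadline_due[OF const]
    eventually_at_right_locally_constant[OF const]
  show ?thesis
    by eventually_elim (use assms(1) in \<open>simp add: idle_if_constant_after\<close>)
qed

lemma eventually_idle_at_left:
  assumes "0 < t" "left_val (rho T R) t v"
  shows "eventually (\<lambda>u. rho T R u = v \<and> controller_idle u) (at_left t)"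
proof -
  have const: "eventually (\<lambda>u. rho T R u = v) (at_left t)"
    using assms(2) by (simp add: left_val_eventually)
  moreover have "eventually (\<lambda>u. 0 < u) (at_left t)"
    using assms(1) by (auto simp: eventually_at_left_field)
  ultimately show ?thesis
    using eventually_no_deadline_due[OF const] eventually_at_left_locally_constant[OF const]
    by eventually_elim (simp add: idle_if_constant_after)
qed

lemma run_invariant:
  assumes "0 \<le> p" "p \<le> q" "Q (rho T R p)"
    and exec_step: "\<And>s M. p \<le> s \<Longrightarrow> s < q \<Longrightarrow> Q (rho T R s) \<Longrightarrow> Q (rst T (exec T dopen W M (R s) s))"
    and internal: "\<And>v w. Deadline v = Deadline w \<Longrightarrow> Dir v = Dir w \<Longrightarrow> Q v \<Longrightarrow> Q w"
  shows "Q (rho T R q)"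
proof -
  have "\<forall>s\<in>{p..q}. Q (rho T R s)"
  proof (rule real_interval_induct[where P = "\<lambda>s. Q (rho T R s)"])
    fix s assume s: "p \<le> s" "s < q" and "Q (rho T R s)"
    obtain v where v: "right_val (rho T R) s v"
      using pre_run_right_val[OF pre_run] s assms(1) by (meson order_trans)
    then have "Q v"
      using right_jump[OF _ v] s assms(1) \<open>Q (rho T R s)\<close> exec_step by force
    with v show "eventually (\<lambda>u. Q (rho T R u)) (at_right s)"
      unfolding right_val_eventually by (auto elim: eventually_mono)
  next
    fix s assume s: "p < s" "s \<le> q" and ev: "eventually (\<lambda>u. Q (rho T R u)) (at_left s)"
    have "0 < s"
      using s assms(1) by simp
    then obtain v where v: "left_val (rho T R) s v"
      using pre_run_left_val[OF pre_run] by blast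
    have "eventually (\<lambda>u. Q v) (at_left s)"
      using ev v unfolding left_val_eventually by eventually_elim simp
    then have "Q v"
      by simp
    with left_jump[OF \<open>0 < s\<close> v] show "Q (rho T R s)"
      by (rule internal)
  qed (use assms in auto)
  with \<open>p \<le> q\<close> show ?thesis
    by simp
qed

lemma guard_unsafe_before:
  assumes "0 < t" "SignalOpen_guard T dopen (R t) t"
  shows "eventually (\<lambda>u. \<not> SafeToOpen T dopen (R u) u) (at_left t)"
proof -
  obtain v where v: "left_val (rho T R) t v"
    using pre_run_left_val[OF pre_run assms(1)] .
  have "Dir v = Close"
    using left_jump(2)[OF assms(1) v] assms(2) by (simp add: SignalOpen_guard_def)
  from eventually_idle_at_left[OF assms(1) v] show ?thesis
  proof eventually_elim
    case (elim u)
    then have "\<not> SignalOpen_guard T dopen (R u) u" and "Dir (R u) = Close"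
      using unchanged_controller_no_guard[of T dopen W "R u" u] rho_eqD(3) \<open>Dir v = Close\<close> by auto
    then show ?case
      by (simp add: SignalOpen_guard_def)
  qed
qed

lemma unsafe_persists_right:
  assumes "0 \<le> t" "\<not> SafeToOpen T dopen (R t) t"
  shows "eventually (\<lambda>u. \<not> SafeToOpen T dopen (R u) u) (at_right t)"
proof -
  obtain x d where x: "x \<in> T" "TrackStatus (R t) x \<noteq> Empty" "Deadline (R t) x = Fin d"
    and "d \<le> t + dopen"
    using assms(2) by (rule not_SafeToOpenE)
  obtain v where v: "right_val (rho T R) t v"
    using pre_run_right_val[OF pre_run assms(1)] .
  have vx: "TrackStatus v x = TrackStatus (R t) x \<and> Deadline v x = Fin d"
    using right_jump[OF assms(1) v]
  proof
    assume "\<exists>M. v = rst T (exec T dopen W M (R t) t)"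
    then obtain M where "v = rst T (exec T dopen W M (R t) t)" ..
    then show ?thesis
      using x Deadline_exec[of T dopen W M "R t" t x] by auto
  qed (use x in simp)
  from v eventually_at_right_less[of t] show ?thesis
    unfolding right_val_eventually
  proof eventually_elim
    case (elim u)
    show ?case
    proof (rule not_SafeToOpenI)
      show "TrackStatus (R u) x \<noteq> Empty" "Deadline (R u) x = Fin d"
        using rho_eqD(1,2)[OF elim(1) x(1)] x(2) vx by simp_all
    qed (use x(1) \<open>d \<le> t + dopen\<close> elim(2) in auto)
  qed
qed

lemma track_leaves_when_safe:
  assumes "0 < t" "SafeToOpen T dopen (R t) t"
    and "eventually (\<lambda>u. \<not> SafeToOpen T dopen (R u) u) (at_left t)"
  shows "\<exists>x\<in>T. TrackStatus (R t) x = Empty \<and> (\<exists>v. left_val (\<lambda>u. TrackStatus (R u) x) t v \<and> v \<noteq> Empty)"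
proof -
  obtain v where v: "left_val (rho T R) t v"
    using pre_run_left_val[OF pre_run assms(1)] .
  then have const: "eventually (\<lambda>u. rho T R u = v) (at_left t)"
    by (simp add: left_val_eventually)
  obtain u where "t - 1 < u" "u < t" "rho T R u = v \<and> \<not> SafeToOpen T dopen (R u) u"
    using eventually_conj[OF const assms(3)] by (rule eventually_at_left_witness[where q = "t - 1"]) auto
  then have "u < t" "rho T R u = v" "\<not> SafeToOpen T dopen (R u) u"
    by simp_all
  obtain x d where x: "x \<in> T" "TrackStatus (R u) x \<noteq> Empty" "Deadline (R u) x = Fin d"
    and "d \<le> u + dopen"
    using \<open>\<not> SafeToOpen T dopen (R u) u\<close> by (rule not_SafeToOpenE)
  have "Deadline (R t) x = Deadline v x"
    using left_jump(1)[OF assms(1) v] x(1) by simp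
  also have "\<dots> = Fin d"
    using rho_eqD(2)[OF \<open>rho T R u = v\<close> x(1)] x(3) by simp
  finally have "Deadline (R t) x = Fin d" .
  moreover have "safe_track dopen (R t) t x"
    using assms(2) x(1) by (simp add: SafeToOpen_def)
  ultimately have "TrackStatus (R t) x = Empty"
    using \<open>d \<le> u + dopen\<close> \<open>u < t\<close> by (auto simp: safe_track_def)
  moreover have "left_val (\<lambda>u. TrackStatus (R u) x) t (TrackStatus v x)"
    using eventually_rho_eqD(1)[OF const x(1)] by (simp add: left_val_eventually)
  moreover have "TrackStatus v x \<noteq> Empty"
    using rho_eqD(1)[OF \<open>rho T R u = v\<close> x(1)] x(2) by simp
  ultimately show ?thesis
    using x(1) by blast
qed

lemma closed_while_unsafe:
  assumes "0 \<le> p" "p \<le> q" "Dir (R p) = Close" "\<forall>s\<in>{p..<q}. \<not> SafeToOpen T dopen (R s) s"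
  shows "Dir (R q) = Close"
proof -
  have "Dir (rho T R q) = Close"
  proof (rule run_invariant[where Q = "\<lambda>v. Dir v = Close"])
    fix s M assume "p \<le> s" "s < q" "Dir (rho T R s) = Close"
    moreover have "\<not> SignalOpen_guard T dopen (R s) s"
      using assms(4) \<open>p \<le> s\<close> \<open>s < q\<close> by (simp add: SignalOpen_guard_def)
    ultimately show "Dir (rst T (exec T dopen W M (R s) s)) = Close"
      by (simp add: Dir_exec)
  qed (use assms in simp_all)
  then show ?thesis
    by simp
qed

end

section \<open>Regular runs\<close>

locale crossing_run = controller_run T dopen W R
  for T :: "'tr set" and dopen W :: real and R :: "real \<Rightarrow> 'tr st" +
  fixes dmin dmax :: real
  assumes dopen_pos: "0 < dopen" and W_pos: "0 < W" and W_less_dmin: "W < dmin"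
    and trains_move: "x \<in> T \<Longrightarrow> train_motion dmin dmax (\<lambda>u. TrackStatus (R u) x)"
begin

lemma visit_before_leaving:
  assumes "x \<in> T" "0 < t" "TrackStatus (R t) x = Empty"
    and "eventually (\<lambda>u. TrackStatus (R u) x \<noteq> Empty) (at_left t)"
  shows "\<exists>c a b. train_visit dmin (\<lambda>u. TrackStatus (R u) x) c a b t"
proof -
  let ?f = "\<lambda>u. TrackStatus (R u) x"
  obtain S where "finite S" and rho_cont: "\<And>u. u \<in> {0<..t} - S \<Longrightarrow> left_val (rho T R) u (rho T R u)"
    using pre_run_left_continuous_except_finite[OF pre_run] by blast
  have cont: "left_val ?f u (?f u)" if "u \<in> {0<..t} - S" for u
    using eventually_rho_eqD(1)[OF rho_cont[OF that, unfolded left_val_eventually] assms(1)] assms(1)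
    by (simp add: left_val_eventually)
  obtain b where "b < t" and occupied_before: "\<And>u. b < u \<Longrightarrow> u < t \<Longrightarrow> ?f u \<noteq> Empty"
    using assms(4) unfolding eventually_at_left_field by blast
  define u0 where "u0 = (max b 0 + t) / 2"
  have "0 < u0" "b < u0" "u0 < t"
    using \<open>b < t\<close> assms(2) by (auto simp: u0_def)
  have "\<exists>c a b' d. train_visit dmin ?f c a b' d \<and> a \<le> u0 \<and> u0 < d"
    by (rule train_motion_visit[OF trains_move[OF assms(1)] \<open>finite S\<close> cont])
      (use \<open>0 < u0\<close> \<open>b < u0\<close> \<open>u0 < t\<close> occupied_before in auto)
  then obtain c a b' d where visit: "train_visit dmin ?f c a b' d" and "a \<le> u0" "u0 < d"
    by blast
  then have occupied: "\<forall>u\<in>{a..<d}. ?f u \<noteq> Empty"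
    by (simp add: train_visit_def)
  have "d \<le> t"
  proof (rule ccontr)
    assume "\<not> d \<le> t"
    then have "?f t \<noteq> Empty"
      using occupied \<open>a \<le> u0\<close> \<open>u0 < t\<close> by simp
    with assms(3) show False
      by simp
  qed
  have "\<forall>u\<in>{a..<t}. ?f u \<noteq> Empty"
  proof
    fix u assume "u \<in> {a..<t}"
    then show "?f u \<noteq> Empty"
      using occupied occupied_before[of u] \<open>b < u0\<close> \<open>u0 < d\<close> by (cases "u < u0") auto
  qed
  with visit \<open>d \<le> t\<close> have "train_visit dmin ?f c a b' t"
    unfolding train_visit_def by (meson order_trans)
  then show ?thesis
    by blast
qed

lemma deadline_cleared_before_arrival:
  assumes "x \<in> T" "0 \<le> c" "c < a" "\<forall>u\<in>{c..<a}. TrackStatus (R u) x = Empty"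
  shows "Deadline (R a) x = Infty"
proof -
  obtain v where v: "right_val (rho T R) c v"
    using pre_run_right_val[OF pre_run assms(2)] .
  obtain p where "c < p" "p < a" "rho T R p = v \<and> controller_idle p"
    using eventually_idle_at_right[OF assms(2) v] by (rule eventually_at_right_witness[where q = a]) (use assms(3) in auto)
  then have "Deadline (R p) x = Infty"
    using unchanged_controller_clears_deadline[of T dopen W "R p" p x] assms(1,4) by auto
  have "Deadline (rho T R a) x = Infty"
  proof (rule run_invariant[where Q = "\<lambda>v. Deadline v x = Infty"])
    fix s M assume "p \<le> s" "s < a" "Deadline (rho T R s) x = Infty"
    with assms \<open>c < p\<close> show "Deadline (rst T (exec T dopen W M (R s) s)) x = Infty"
      using Deadline_exec[of T dopen W M "R s" s x] by auto
  qed (use assms \<open>c < p\<close> \<open>p < a\<close> \<open>Deadline (R p) x = Infty\<close> in auto)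
  then show ?thesis
    using assms(1) by simp
qed

lemma deadline_set_on_arrival:
  assumes "x \<in> T" "0 \<le> a" "a < b" "Deadline (R a) x = Infty"
    and "\<forall>u\<in>{a..<b}. TrackStatus (R u) x = Coming"
  shows "eventually (\<lambda>u. Deadline (R u) x = Fin (a + W)) (at_right a)"
proof -
  obtain v where v: "right_val (rho T R) a v"
    using pre_run_right_val[OF pre_run assms(2)] .
  obtain w where "a < w" "w < b" "rho T R w = v \<and> controller_idle w"
    using eventually_idle_at_right[OF assms(2) v] by (rule eventually_at_right_witness[where q = b]) (use assms(3) in auto)
  then have "Deadline v x \<noteq> Infty"
    using unchanged_controller_sets_deadline[of T dopen W "R w" w x] rho_eqD(2)[of T R w v x] assms(1,5)
    by auto
  then have "v \<noteq> rho T R a"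
    using assms(1,4) by auto
  then obtain M where "v = rst T (exec T dopen W M (R a) a)"
    using right_jump[OF assms(2) v] by auto
  with \<open>Deadline v x \<noteq> Infty\<close> have "Deadline v x = Fin (a + W)"
    using Deadline_exec[of T dopen W M "R a" a x] assms(1,4) by auto
  with eventually_rho_eqD(2)[OF v[unfolded right_val_eventually] assms(1)] show ?thesis
    by simp
qed

lemma deadline_kept_while_occupied:
  assumes "x \<in> T" "0 \<le> p" "p \<le> q" "Deadline (R p) x \<noteq> Infty"
    and "\<forall>s\<in>{p..<q}. TrackStatus (R s) x \<noteq> Empty"
  shows "Deadline (R q) x = Deadline (R p) x"
proof -
  have "Deadline (rho T R q) x = Deadline (R p) x"
  proof (rule run_invariant[where Q = "\<lambda>v. Deadline v x = Deadline (R p) x"])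
    fix s M assume "p \<le> s" "s < q" "Deadline (rho T R s) x = Deadline (R p) x"
    with assms show "Deadline (rst T (exec T dopen W M (R s) s)) x = Deadline (R p) x"
      using Deadline_exec[of T dopen W M "R s" s x] by auto
  qed (use assms in auto)
  then show ?thesis
    using assms(1) by simp
qed

lemma closes_at_deadline:
  assumes "x \<in> T" "0 \<le> e" "TrackStatus (R e) x \<noteq> Empty" "Deadline (R e) x = Fin e"
  shows "eventually (\<lambda>u. Dir (R u) = Close) (at_right e)"
proof -
  have "\<not> SafeToOpen T dopen (R e) e"
    using assms dopen_pos by (intro not_SafeToOpenI[of x]) auto
  then have no_guard: "\<not> SignalOpen_guard T dopen (R e) e"
    by (simp add: SignalOpen_guard_def)
  have due: "Controller \<in> M \<Longrightarrow> Dir (exec T dopen W M (R e) e) = Close" for M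
    using Dir_exec[OF no_guard] assms(1,4) by auto
  obtain v where v: "right_val (rho T R) e v" and "Dir v = Close"
  proof (cases "Dir (R e)")
    case Open
    then have "\<not> controller_idle e"
      using unchanged_controller_closes[of T dopen W "R e" e x] assms(1,4) by auto
    then have "fires T dopen W R Controller e"
      using controller_fires assms(2) no_guard by blast
    then obtain v M where "right_val (rho T R) e v" "Controller \<in> M" "v = rst T (exec T dopen W M (R e) e)"
      unfolding fires_def by auto
    with due that show ?thesis
      by simp
  next
    case Close
    obtain v where v: "right_val (rho T R) e v"
      using pre_run_right_val[OF pre_run assms(2)] .
    have "Dir v = Close"
      using right_jump[OF assms(2) v]
    proof
      assume "\<exists>M. v = rst T (exec T dopen W M (R e) e)"
      then obtain M where "v = rst T (exec T dopen W M (R e) e)" ..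
      with Close show ?thesis
        using Dir_exec[OF no_guard] by simp
    qed (simp add: Close)
    with v show ?thesis
      by (rule that)
  qed
  with eventually_rho_eqD(3)[OF v[unfolded right_val_eventually]] show ?thesis
    by simp
qed

lemma leaving_train_closes:
  assumes "x \<in> T" "0 < t" "TrackStatus (R t) x = Empty"
    and "eventually (\<lambda>u. TrackStatus (R u) x \<noteq> Empty) (at_left t)"
  shows "Dir (R t) = Close \<and> (\<exists>d<t. Deadline (R t) x = Fin d)"
proof -
  obtain c a b where "train_visit dmin (\<lambda>u. TrackStatus (R u) x) c a b t"
    using visit_before_leaving[OF assms] by blast
  then have "0 \<le> c" "c < a" "a + dmin \<le> b" "b \<le> t"
    and empty: "\<forall>u\<in>{c..<a}. TrackStatus (R u) x = Empty"
    and coming: "\<forall>u\<in>{a..<b}. TrackStatus (R u) x = Coming"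
    and occupied: "\<forall>u\<in>{a..<t}. TrackStatus (R u) x \<noteq> Empty"
    unfolding train_visit_def by blast+
  define e where "e = a + W"
  have "0 \<le> a" "a < e" "e < b" "e < t"
    using \<open>0 \<le> c\<close> \<open>c < a\<close> \<open>a + dmin \<le> b\<close> \<open>b \<le> t\<close> W_pos W_less_dmin by (auto simp: e_def)
  have "Deadline (R a) x = Infty"
    using deadline_cleared_before_arrival[OF assms(1) \<open>0 \<le> c\<close> \<open>c < a\<close> empty] .
  with coming have "eventually (\<lambda>u. Deadline (R u) x = Fin e) (at_right a)"
    unfolding e_def using deadline_set_on_arrival[OF assms(1) \<open>0 \<le> a\<close>] \<open>e < b\<close> \<open>a < e\<close> by auto
  then obtain p where "a < p" "p < e" "Deadline (R p) x = Fin e"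
    by (rule eventually_at_right_witness[where q = e]) (use \<open>a < e\<close> in auto)
  have deadline: "Deadline (R s) x = Fin e" if "p \<le> s" "s \<le> t" for s
    using deadline_kept_while_occupied[OF assms(1) _ \<open>p \<le> s\<close>] occupied \<open>a < p\<close> \<open>0 \<le> a\<close>
      \<open>Deadline (R p) x = Fin e\<close> that by auto
  have "TrackStatus (R e) x \<noteq> Empty"
    using occupied \<open>a < e\<close> \<open>e < t\<close> by simp
  then have "eventually (\<lambda>u. Dir (R u) = Close) (at_right e)"
    using closes_at_deadline[OF assms(1)] deadline[of e] \<open>0 \<le> a\<close> \<open>a < e\<close> \<open>p < e\<close> \<open>e < t\<close> by simp
  then obtain p' where "e < p'" "p' < t" "Dir (R p') = Close"
    by (rule eventually_at_right_witness[where q = t]) (use \<open>e < t\<close> in auto)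
  moreover have "\<not> SafeToOpen T dopen (R s) s" if "p' \<le> s" "s < t" for s
  proof (rule not_SafeToOpenI[of x])
    show "TrackStatus (R s) x \<noteq> Empty" "Deadline (R s) x = Fin e"
      using occupied deadline \<open>a < e\<close> \<open>p < e\<close> \<open>e < p'\<close> that by auto
  qed (use assms(1) dopen_pos \<open>e < p'\<close> that in auto)
  ultimately have "Dir (R t) = Close"
    using closed_while_unsafe[of p' t] \<open>0 \<le> a\<close> \<open>a < e\<close> by auto
  then show ?thesis
    using deadline[of t] \<open>e < t\<close> \<open>p < e\<close> by auto
qed

lemma guard_no_deadline_due:
  assumes "0 < t" "SignalOpen_guard T dopen (R t) t" "y \<in> T"
  shows "Deadline (R t) y \<noteq> Fin t"
proof
  assume due: "Deadline (R t) y = Fin t"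
  have "TrackStatus (R t) y = Empty"
    using assms(2,3) due dopen_pos by (auto simp: SignalOpen_guard_def SafeToOpen_def safe_track_def)
  obtain v where v: "left_val (rho T R) t v"
    using pre_run_left_val[OF pre_run assms(1)] .
  have "Deadline v y = Fin t"
    using left_jump(1)[OF assms(1) v] assms(3) due by simp
  show False
  proof (cases "TrackStatus v y = Empty")
    case True
    obtain u where "t - 1 < u" "u < t" "rho T R u = v \<and> controller_idle u"
      using eventually_idle_at_left[OF assms(1) v]
      by (rule eventually_at_left_witness[where q = "t - 1"]) auto
    then show False
      using unchanged_controller_clears_deadline[of T dopen W "R u" u y] rho_eqD(1,2)[of T R u v y]
        assms(3) True \<open>Deadline v y = Fin t\<close> by auto
  next
    case False
    have "eventually (\<lambda>u. TrackStatus (R u) y \<noteq> Empty) (at_left t)"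
      using eventually_rho_eqD(1)[OF v[unfolded left_val_eventually] assms(3)] False
      by (auto elim: eventually_mono)
    then show False
      using leaving_train_closes[OF assms(3,1) \<open>TrackStatus (R t) y = Empty\<close>] due by auto
  qed
qed

lemma guard_fires:
  assumes "0 < t" "SignalOpen_guard T dopen (R t) t"
  shows "fires T dopen W R Controller t"
  using assms guard_no_deadline_due[OF assms] unchanged_controller_no_guard[of T dopen W "R t" t]
  by (intro controller_fires) auto

lemma guard_iff_safe_becomes_true:
  assumes "0 < t"
  shows "SignalOpen_guard T dopen (R t) t \<longleftrightarrow> becomes (\<lambda>u. SafeToOpen T dopen (R u) u) True t"
proof
  assume guard: "SignalOpen_guard T dopen (R t) t"
  then have "left_val (\<lambda>u. SafeToOpen T dopen (R u) u) t False"
    using guard_unsafe_before[OF assms] by (simp add: left_val_eventually)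
  with guard show "becomes (\<lambda>u. SafeToOpen T dopen (R u) u) True t"
    unfolding becomes_def SignalOpen_guard_def by blast
next
  assume "becomes (\<lambda>u. SafeToOpen T dopen (R u) u) True t"
  then consider
      (rises) "left_val (\<lambda>u. SafeToOpen T dopen (R u) u) t False" "SafeToOpen T dopen (R t) t"
    | (falls) "\<not> SafeToOpen T dopen (R t) t" "right_val (\<lambda>u. SafeToOpen T dopen (R u) u) t True"
    unfolding becomes_def by auto
  then show "SignalOpen_guard T dopen (R t) t"
  proof cases
    case rises
    then obtain x where "x \<in> T" "TrackStatus (R t) x = Empty"
      and "\<exists>v. left_val (\<lambda>u. TrackStatus (R u) x) t v \<and> v \<noteq> Empty"
      using track_leaves_when_safe[OF assms] by (auto simp: left_val_eventually)
    then have "eventually (\<lambda>u. TrackStatus (R u) x \<noteq> Empty) (at_left t)"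
      by (auto simp: left_val_eventually elim: eventually_mono)
    then have "Dir (R t) = Close"
      using leaving_train_closes[OF \<open>x \<in> T\<close> assms \<open>TrackStatus (R t) x = Empty\<close>] by blast
    with rises(2) show ?thesis
      by (simp add: SignalOpen_guard_def)
  next
    case falls
    have "eventually (\<lambda>u. \<not> SafeToOpen T dopen (R u) u) (at_right t)"
      using unsafe_persists_right[OF _ falls(1)] assms by simp
    moreover have "eventually (\<lambda>u. SafeToOpen T dopen (R u) u) (at_right t)"
      using falls(2) by (simp add: right_val_eventually)
    ultimately have "eventually (\<lambda>u. False) (at_right t)"
      by eventually_elim simp
    then show ?thesis
      by simp
  qed
qed

end

theorem mainTheorem8:
  fixes T :: "'tr set" and dclose dopen dmin dmax :: real and R :: "real \<Rightarrow> 'tr st" and t :: real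
  assumes "finite T"
    and "0 < dclose" and "0 < dopen" and "0 < dmin" and "0 < dmax"
    and "dclose < dmin" and "dmin \<le> dmax"
    and "regular_run T dclose dopen dmin dmax R"
    and "0 < t"
  shows "(SignalOpen_guard T dopen (R t) t \<longleftrightarrow>
            becomes (\<lambda>u. SafeToOpen T dopen (R u) u) True t)
       \<and> (SignalOpen_guard T dopen (R t) t \<longleftrightarrow> SignalOpen_fires T dopen (dmin - dclose) R t)
       \<and> (SignalOpen_fires T dopen (dmin - dclose) R t \<longrightarrow>
            (\<exists>x\<in>T. becomes (\<lambda>u. TrackStatus (R u) x) Empty t))"
proof -
  interpret crossing_run T dopen "dmin - dclose" R dmin dmax
    by unfold_locales (use assms in \<open>auto simp: regular_run_def Let_def\<close>)
  have guard_fires_iff: "SignalOpen_guard T dopen (R t) t \<longleftrightarrow> SignalOpen_fires T dopen (dmin - dclose) R t"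
    using guard_fires[OF \<open>0 < t\<close>] by (auto simp: SignalOpen_fires_def)
  have "\<exists>x\<in>T. becomes (\<lambda>u. TrackStatus (R u) x) Empty t" if guard: "SignalOpen_guard T dopen (R t) t"
    using track_leaves_when_safe[OF \<open>0 < t\<close> _ guard_unsafe_before[OF \<open>0 < t\<close> guard]] guard
    by (auto simp: SignalOpen_guard_def becomes_def)
  with guard_iff_safe_becomes_true[OF \<open>0 < t\<close>] guard_fires_iff show ?thesis
    by blast
qed

end
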